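(* Let $A$ be a $d$-dimensional system, $B=B_1B_2$ with $B_1$ finite-dimensional and $B_2$ a qubit, and $C$ a qubit. Let $\rho_1^{AB_1},\rho_2^{AB_1}$ be states, $p_1,p_2\ge0$ with $p_1+p_2=1$, and $$\rho^{ABC}=p_1\,\rho_1^{AB_1}\otimes|\Psi^+\rangle\langle\Psi^+|^{B_2C}+p_2\,\rho_2^{AB_1}\otimes|\Psi^-\rangle\langle\Psi^-|^{B_2C},$$ with $|\Psi^\pm\rangle=(|01\rangle\pm|10\rangle)/\sqrt2$. Then for every CPTP map $\Lambda$ on system $A$, $$E^{AB|C}\big((\Lambda^A\otimes\mathrm{id}^{BC})[\rho^{ABC}]\big)=\tfrac12\big\|(\Lambda^A\otimes\mathrm{id}^{B_1})[p_1\rho_1^{AB_1}-p_2\rho_2^{AB_1}]\big\|_1 .$$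
   Context: Negativity of a bipartite operator $X$ with respect to the cut $X_1|X_2$ is $E^{X_1|X_2}(X)=\frac{\|X^{T_{X_2}}\|_1-1}{2}$, where $T_{X_2}$ is the partial transpose on $X_2$ and $\|M\|_1=\mathrm{Tr}\sqrt{M^\dagger M}$; $E^{AB|C}$ treats $AB=AB_1B_2$ as one party and $C$ as the other. *)

theory Defs
  imports Complex_Main "Jordan_Normal_Form.Matrix"
begin

text \<open>Composite systems use the Kronecker product with the
standard index ordering: index (i,k) of X (x) Y is i * dimY + k.\<close>

definition mtrace :: "complex mat \<Rightarrow> complex" where
  "mtrace M = (\<Sum>i<dim_row M. M $$ (i, i))"

definition adj :: "complex mat \<Rightarrow> complex mat" where
  "adj M = mat (dim_col M) (dim_row M) (\<lambda>(i, j). cnj (M $$ (j, i)))"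

definition kron :: "complex mat \<Rightarrow> complex mat \<Rightarrow> complex mat" where
  "kron X Y = mat (dim_row X * dim_row Y) (dim_col X * dim_col Y)
     (\<lambda>(i, j). X $$ (i div dim_row Y, j div dim_col Y) * Y $$ (i mod dim_row Y, j mod dim_col Y))"

definition psd :: "complex mat \<Rightarrow> bool" where
  "psd M \<longleftrightarrow> dim_row M = dim_col M \<and> adj M = M \<and>
     (\<forall>v \<in> carrier_vec (dim_row M).
        let q = (\<Sum>i<dim_row M. cnj (v $ i) * (M *\<^sub>v v) $ i) in Im q = 0 \<and> Re q \<ge> 0)"

definition density :: "nat \<Rightarrow> complex mat \<Rightarrow> bool" where
  "density n \<rho> \<longleftrightarrow> \<rho> \<in> carrier_mat n n \<and> psd \<rho> \<and> mtrace \<rho> = 1"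

definition msqrt :: "complex mat \<Rightarrow> complex mat" where
  "msqrt M = (THE S. S \<in> carrier_mat (dim_row M) (dim_row M) \<and> psd S \<and> S * S = M)"

definition trace_norm :: "complex mat \<Rightarrow> real" where
  "trace_norm M = Re (mtrace (msqrt (adj M * M)))"

text \<open>Partial transpose on the second factor of an (n1*n2)-dimensional bipartite operator.\<close>
definition ptrans2 :: "nat \<Rightarrow> nat \<Rightarrow> complex mat \<Rightarrow> complex mat" where
  "ptrans2 n1 n2 X = mat (n1 * n2) (n1 * n2)
     (\<lambda>(i, j). X $$ ((i div n2) * n2 + j mod n2, (j div n2) * n2 + i mod n2))"

definition negativity :: "nat \<Rightarrow> nat \<Rightarrow> complex mat \<Rightarrow> real" where
  "negativity n1 n2 X = (trace_norm (ptrans2 n1 n2 X) - 1) / 2"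

text \<open>(Lambda (x) id_n) for a map Lambda from d x d to d' x d' matrices, acting on the
first factor of a (d*n)-dimensional operator (defined blockwise, i.e. by linear extension).\<close>
definition block :: "nat \<Rightarrow> nat \<Rightarrow> nat \<Rightarrow> nat \<Rightarrow> complex mat \<Rightarrow> complex mat" where
  "block d n b c X = mat d d (\<lambda>(a, a'). X $$ (a * n + b, a' * n + c))"

definition tensor_id :: "nat \<Rightarrow> nat \<Rightarrow> nat \<Rightarrow> (complex mat \<Rightarrow> complex mat) \<Rightarrow> complex mat \<Rightarrow> complex mat" where
  "tensor_id d d' n \<Lambda> X = mat (d' * n) (d' * n)
     (\<lambda>(i, j). \<Lambda> (block d n (i mod n) (j mod n) X) $$ (i div n, j div n))"

definition cptp :: "nat \<Rightarrow> nat \<Rightarrow> (complex mat \<Rightarrow> complex mat) \<Rightarrow> bool" where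
  "cptp d d' \<Lambda> \<longleftrightarrow>
     (\<forall>X \<in> carrier_mat d d. \<Lambda> X \<in> carrier_mat d' d') \<and>
     (\<forall>X \<in> carrier_mat d d. \<forall>Y \<in> carrier_mat d d. \<Lambda> (X + Y) = \<Lambda> X + \<Lambda> Y) \<and>
     (\<forall>c. \<forall>X \<in> carrier_mat d d. \<Lambda> (c \<cdot>\<^sub>m X) = c \<cdot>\<^sub>m \<Lambda> X) \<and>
     (\<forall>X \<in> carrier_mat d d. mtrace (\<Lambda> X) = mtrace X) \<and>
     (\<forall>n. \<forall>X \<in> carrier_mat (d * n) (d * n). psd X \<longrightarrow> psd (tensor_id d d' n \<Lambda> X))"

text \<open>Bell projectors |Psi+-><Psi+-| on two qubits, basis order |00>,|01>,|10>,|11>.\<close>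
definition psi_plus_proj :: "complex mat" where
  "psi_plus_proj = mat 4 4 (\<lambda>(i, j). if i \<in> {1, 2} \<and> j \<in> {1, 2} then 1 / 2 else 0)"

definition psi_minus_proj :: "complex mat" where
  "psi_minus_proj = mat 4 4 (\<lambda>(i, j). if i \<in> {1, 2} \<and> j \<in> {1, 2}
      then (if i = j then 1 / 2 else - 1 / 2) else 0)"

end

theory Submission
  imports Defs "Jordan_Normal_Form.Spectral_Radius" "Jordan_Normal_Form.Schur_Decomposition"
begin

text \<open>Write X = p_1 (\<Lambda> \<otimes> id)(\<rho>_1) and Y = p_2 (\<Lambda> \<otimes> id)(\<rho>_2). Since \<Lambda> acts on A only, the channel
output is X \<otimes> |\<Psi>+\<rangle>\<langle>\<Psi>+| + Y \<otimes> |\<Psi>-\<rangle>\<langle>\<Psi>-|. Transposing C turns the two Bell projectors into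
H_o \<plusminus> F, where H_o is half the projector onto span{|01\<rangle>,|10\<rangle>} and F = (|00\<rangle>\<langle>11| + |11\<rangle>\<langle>00|)/2,
so the partial transpose is (X + Y) \<otimes> H_o + (X - Y) \<otimes> F. The two summands live on orthogonal
blocks and |F| = H_e, half the projector onto span{|00\<rangle>,|11\<rangle>}; hence its modulus is
(X + Y) \<otimes> H_o + |X - Y| \<otimes> H_e, whose trace is Tr (X + Y) + \<parallel>X - Y\<parallel>_1 = 1 + \<parallel>X - Y\<parallel>_1.
The positive square root underlying the trace norm comes from the spectral theorem for Hermitian
matrices, proved by deflating along an eigenvector completed to an orthonormal basis.\<close>

section \<open>Adjoints and positive semidefinite matrices\<close>

lemma mult_carrier_mat_square [simp]:
  "A \<in> carrier_mat n n \<Longrightarrow> B \<in> carrier_mat n n \<Longrightarrow> A * B \<in> carrier_mat n n"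
  by (rule mult_carrier_mat)

lemma adj_dims [simp]: "dim_row (adj A) = dim_col A" "dim_col (adj A) = dim_row A"
  by (auto simp: adj_def)

lemma adj_carrier [simp]: "A \<in> carrier_mat n m \<Longrightarrow> adj A \<in> carrier_mat m n"
  by (metis adj_dims carrier_matD carrier_matI)

lemma adj_index [simp]: "i < dim_col A \<Longrightarrow> j < dim_row A \<Longrightarrow> adj A $$ (i, j) = cnj (A $$ (j, i))"
  by (simp add: adj_def)

lemma adj_adj [simp]: "adj (adj A) = A"
  by (rule eq_matI) auto

lemma adj_mult: "A \<in> carrier_mat n k \<Longrightarrow> B \<in> carrier_mat k m \<Longrightarrow> adj (A * B) = adj B * adj A"
  by (rule eq_matI) (auto simp: scalar_prod_def cnj_sum intro!: sum.cong)

lemma adj_add: "A \<in> carrier_mat n m \<Longrightarrow> B \<in> carrier_mat n m \<Longrightarrow> adj (A + B) = adj A + adj B"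
  by (rule eq_matI) auto

lemma adj_minus: "A \<in> carrier_mat n m \<Longrightarrow> B \<in> carrier_mat n m \<Longrightarrow> adj (A - B) = adj A - adj B"
  by (rule eq_matI) auto

lemma adj_smult: "adj (c \<cdot>\<^sub>m A) = cnj c \<cdot>\<^sub>m adj A"
  by (rule eq_matI) auto

lemma adj_one [simp]: "adj (1\<^sub>m n) = 1\<^sub>m n"
  by (rule eq_matI) auto

lemma adj_zero [simp]: "adj (0\<^sub>m n m) = 0\<^sub>m m n"
  by (rule eq_matI) auto

lemma adj_mat_diag: "adj (mat_diag n f) = mat_diag n (\<lambda>i. cnj (f i))"
  by (rule eq_matI) (auto simp: mat_diag_def)

lemma adj_four_block_mat:
  assumes "A \<in> carrier_mat n1 m1" "B \<in> carrier_mat n1 m2" "C \<in> carrier_mat n2 m1" "D \<in> carrier_mat n2 m2"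
  shows "adj (four_block_mat A B C D) = four_block_mat (adj A) (adj C) (adj B) (adj D)"
  by (rule eq_matI, insert assms) auto

lemma cscalar_prod_adj:
  assumes "A \<in> carrier_mat n m" "x \<in> carrier_vec m" "y \<in> carrier_vec n"
  shows "(A *\<^sub>v x) \<bullet>c y = x \<bullet>c (adj A *\<^sub>v y)"
proof -
  have "(A *\<^sub>v x) \<bullet>c y = (\<Sum>i<n. \<Sum>l<m. A $$ (i, l) * x $ l * cnj (y $ i))"
    using assms by (simp add: scalar_prod_def atLeast0LessThan row_def sum_distrib_right)
  also have "\<dots> = (\<Sum>l<m. \<Sum>i<n. A $$ (i, l) * x $ l * cnj (y $ i))"
    by (rule sum.swap)
  also have "\<dots> = x \<bullet>c (adj A *\<^sub>v y)"
    using assms by (simp add: scalar_prod_def atLeast0LessThan row_def cnj_sum sum_distrib_left mult_ac)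
  finally show ?thesis .
qed

lemma cscalar_prod_smult:
  "x \<in> carrier_vec n \<Longrightarrow> y \<in> carrier_vec n \<Longrightarrow> (a \<cdot>\<^sub>v x) \<bullet>c (b \<cdot>\<^sub>v y) = a * cnj b * (x \<bullet>c y)"
  by (auto simp: scalar_prod_def sum_distrib_left mult_ac)

lemma smult_mult_mat_vec:
  "A \<in> carrier_mat n m \<Longrightarrow> v \<in> carrier_vec m \<Longrightarrow> (c \<cdot>\<^sub>m A) *\<^sub>v v = c \<cdot>\<^sub>v (A *\<^sub>v v)"
  by (rule eq_vecI) (auto simp: scalar_prod_def sum_distrib_left mult_ac)

definition quad_form :: "complex mat \<Rightarrow> complex vec \<Rightarrow> complex" where
  "quad_form M v = (M *\<^sub>v v) \<bullet>c v"

lemma psd_iff_quad_form: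
  "psd M \<longleftrightarrow> dim_row M = dim_col M \<and> adj M = M \<and> (\<forall>v \<in> carrier_vec (dim_row M). quad_form M v \<ge> 0)"
proof -
  have "quad_form M v = (\<Sum>i<dim_row M. cnj (v $ i) * (M *\<^sub>v v) $ i)"
    if "v \<in> carrier_vec (dim_row M)" for v
    using that by (auto simp: quad_form_def scalar_prod_def atLeast0LessThan mult.commute intro!: sum.cong)
  then show ?thesis
    unfolding psd_def Let_def by (auto simp: less_eq_complex_def)
qed

lemma psdD:
  assumes "psd M" "M \<in> carrier_mat n n"
  shows "adj M = M" "\<And>v. v \<in> carrier_vec n \<Longrightarrow> quad_form M v \<ge> 0"
  using assms by (auto simp: psd_iff_quad_form)

lemma psdI:
  assumes "M \<in> carrier_mat n n" "adj M = M" "\<And>v. v \<in> carrier_vec n \<Longrightarrow> quad_form M v \<ge> 0"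
  shows "psd M"
  using assms by (auto simp: psd_iff_quad_form)

lemma adj_congruence:
  assumes A: "A \<in> carrier_mat n n" and B: "B \<in> carrier_mat n k"
  shows "adj (adj B * A * B) = adj B * adj A * B"
proof -
  have "adj (adj B * A * B) = adj B * adj (adj B * A)"
    using A B by (intro adj_mult[of _ k n]) auto
  also have "\<dots> = adj B * adj A * B"
    using A B by (simp add: adj_mult[of _ k n _ n] assoc_mult_mat[of _ k n _ n _ k])
  finally show ?thesis .
qed

lemma psd_congruence:
  assumes A: "psd A" "A \<in> carrier_mat n n" and B: "B \<in> carrier_mat n k"
  shows "psd (adj B * A * B)"
proof (rule psdI)
  show "adj B * A * B \<in> carrier_mat k k"
    using A B by auto
  show "adj (adj B * A * B) = adj B * A * B"
    using adj_congruence[OF A(2) B] psdD(1)[OF A] by simp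
next
  fix v :: "complex vec"
  assume v: "v \<in> carrier_vec k"
  have "quad_form (adj B * A * B) v = (adj B *\<^sub>v (A *\<^sub>v (B *\<^sub>v v))) \<bullet>c v"
  proof -
    have "adj B * A \<in> carrier_mat k n" "B *\<^sub>v v \<in> carrier_vec n"
      using A B v by auto
    then show ?thesis
      using A B v unfolding quad_form_def
      by (simp add: assoc_mult_mat_vec[of "adj B * A" k n B k] assoc_mult_mat_vec[of "adj B" k n A n])
  qed
  also have "\<dots> = quad_form A (B *\<^sub>v v)"
    using A B v by (simp add: quad_form_def cscalar_prod_adj[of "adj B" k n])
  finally show "quad_form (adj B * A * B) v \<ge> 0"
    using psdD(2)[OF A] B v by auto
qed

lemma psd_one: "psd (1\<^sub>m n)"
  by (rule psdI[of _ n]) (auto simp: quad_form_def)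

lemma psd_adj_mult_self:
  assumes "B \<in> carrier_mat k n"
  shows "psd (adj B * B)"
  using psd_congruence[OF psd_one[of k] _ assms] assms by simp

lemma psd_add:
  assumes "psd A" "psd B" "A \<in> carrier_mat n n" "B \<in> carrier_mat n n"
  shows "psd (A + B)"
proof (rule psdI)
  show "A + B \<in> carrier_mat n n" "adj (A + B) = A + B"
    using assms by (auto simp: adj_add psdD)
  fix v :: "complex vec"
  assume "v \<in> carrier_vec n"
  then have "quad_form (A + B) v = quad_form A v + quad_form B v"
    using assms by (simp add: quad_form_def add_mult_distrib_mat_vec[of _ n n] add_scalar_prod_distrib[of _ n])
  then show "quad_form (A + B) v \<ge> 0"
    using assms psdD(2) \<open>v \<in> carrier_vec n\<close> by (metis add_nonneg_nonneg)
qed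

lemma psd_smult:
  assumes "psd A" "A \<in> carrier_mat n n" "c \<ge> 0"
  shows "psd (complex_of_real c \<cdot>\<^sub>m A)"
proof (rule psdI)
  show "complex_of_real c \<cdot>\<^sub>m A \<in> carrier_mat n n" "adj (complex_of_real c \<cdot>\<^sub>m A) = complex_of_real c \<cdot>\<^sub>m A"
    using assms by (auto simp: adj_smult psdD)
  fix v :: "complex vec"
  assume v: "v \<in> carrier_vec n"
  then have "quad_form (complex_of_real c \<cdot>\<^sub>m A) v = c * quad_form A v"
    using assms by (simp add: quad_form_def smult_mult_mat_vec[of _ n n])
  then show "quad_form (complex_of_real c \<cdot>\<^sub>m A) v \<ge> 0"
    using psdD(2)[OF assms(1,2) v] assms(3) by (auto simp: less_eq_complex_def)
qed

lemma psd_mat_diag: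
  assumes "\<And>i. i < n \<Longrightarrow> f i = complex_of_real (r i)" "\<And>i. i < n \<Longrightarrow> r i \<ge> 0"
  shows "psd (mat_diag n f)"
proof -
  let ?g = "mat_diag n (\<lambda>i. complex_of_real (sqrt (r i)))"
  have "mat_diag n f = adj ?g * ?g"
    unfolding adj_mat_diag mat_diag_diag using assms
    by (auto simp: mat_diag_def simp flip: of_real_mult intro!: eq_matI)
  then show ?thesis
    using psd_adj_mult_self[of ?g n n] by simp
qed

lemma mtrace_mult_comm:
  assumes "A \<in> carrier_mat n k" "B \<in> carrier_mat k n"
  shows "mtrace (A * B) = mtrace (B * A)"
proof -
  have "mtrace (A * B) = (\<Sum>i<n. \<Sum>l<k. A $$ (i, l) * B $$ (l, i))"
    using assms by (simp add: mtrace_def scalar_prod_def atLeast0LessThan)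
  also have "\<dots> = (\<Sum>l<k. \<Sum>i<n. B $$ (l, i) * A $$ (i, l))"
    by (subst sum.swap) (simp add: mult.commute)
  also have "\<dots> = mtrace (B * A)"
    using assms by (simp add: mtrace_def scalar_prod_def atLeast0LessThan)
  finally show ?thesis .
qed

lemma mtrace_add: "A \<in> carrier_mat n n \<Longrightarrow> B \<in> carrier_mat n n \<Longrightarrow> mtrace (A + B) = mtrace A + mtrace B"
  by (simp add: mtrace_def sum.distrib)

lemma mtrace_uminus: "A \<in> carrier_mat n n \<Longrightarrow> mtrace (- A) = - mtrace A"
  by (simp add: mtrace_def sum_negf)

lemma mtrace_smult: "A \<in> carrier_mat n n \<Longrightarrow> mtrace (c \<cdot>\<^sub>m A) = c * mtrace A"
  by (simp add: mtrace_def sum_distrib_left)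

lemma mtrace_adj_mult_self:
  assumes "B \<in> carrier_mat k n"
  shows "mtrace (adj B * B) = complex_of_real (\<Sum>i<n. \<Sum>l<k. (cmod (B $$ (l, i)))\<^sup>2)"
proof -
  have "mtrace (adj B * B) = (\<Sum>i<n. \<Sum>l<k. cnj (B $$ (l, i)) * B $$ (l, i))"
    using assms by (simp add: mtrace_def scalar_prod_def atLeast0LessThan)
  also have "\<dots> = (\<Sum>i<n. \<Sum>l<k. complex_of_real ((cmod (B $$ (l, i)))\<^sup>2))"
    by (intro sum.cong refl) (metis complex_norm_square mult.commute)
  finally show ?thesis by simp
qed

lemma Re_mtrace_adj_mult_self_nonneg: "B \<in> carrier_mat k n \<Longrightarrow> Re (mtrace (adj B * B)) \<ge> 0"
  by (simp add: mtrace_adj_mult_self sum_nonneg)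

lemma zero_if_Re_mtrace_adj_mult_self_le_0:
  assumes B: "B \<in> carrier_mat k n" and t: "Re (mtrace (adj B * B)) \<le> 0"
  shows "B = 0\<^sub>m k n"
proof (rule eq_matI)
  fix l i
  assume "l < dim_row (0\<^sub>m k n)" "i < dim_col (0\<^sub>m k n)"
  then have li: "l \<in> {..<k}" "i \<in> {..<n}" by auto
  have "(\<Sum>i<n. \<Sum>l<k. (cmod (B $$ (l, i)))\<^sup>2) = 0"
    using t mtrace_adj_mult_self[OF B] by (simp add: antisym sum_nonneg)
  then have "(cmod (B $$ (l, i)))\<^sup>2 = 0"
    using li by (simp add: sum_nonneg_eq_0_iff sum_nonneg)
  then show "B $$ (l, i) = 0\<^sub>m k n $$ (l, i)"
    using li by auto
qed (use B in auto)

section \<open>Unitary diagonalization and matrix square roots\<close>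

definition orthonormal :: "complex vec list \<Rightarrow> bool" where
  "orthonormal us \<longleftrightarrow> (\<forall>i<length us. \<forall>j<length us. us ! i \<bullet>c us ! j = (if i = j then 1 else 0))"

definition unitary_mat :: "nat \<Rightarrow> complex mat \<Rightarrow> bool" where
  "unitary_mat n U \<longleftrightarrow> U \<in> carrier_mat n n \<and> adj U * U = 1\<^sub>m n \<and> U * adj U = 1\<^sub>m n"

lemma unitary_matI:
  assumes "U \<in> carrier_mat n n" "adj U * U = 1\<^sub>m n"
  shows "unitary_mat n U"
  using assms mat_mult_left_right_inverse[OF adj_carrier[OF assms(1)] assms(1)]
  by (simp add: unitary_mat_def)

lemma unitary_mat_carrier: "unitary_mat n U \<Longrightarrow> U \<in> carrier_mat n n"
  by (simp add: unitary_mat_def)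

lemma unitary_mat_cancel_left:
  assumes "unitary_mat n U" "A \<in> carrier_mat n m"
  shows "adj U * (U * A) = A"
  using assms assoc_mult_mat[of "adj U" n n U n A m] by (simp add: unitary_mat_def)

lemma unitary_mat_adj_conj:
  assumes "unitary_mat n U" "A \<in> carrier_mat n n"
  shows "U * (adj U * A * U) * adj U = A"
proof -
  have U: "U \<in> carrier_mat n n" "U * adj U = 1\<^sub>m n"
    using assms(1) by (auto simp: unitary_mat_def)
  have UA: "adj U * A \<in> carrier_mat n n"
    using adj_carrier[OF U(1)] assms(2) by (rule mult_carrier_mat)
  have "U * (adj U * A * U) * adj U = U * (adj U * A * U * adj U)"
    using U UA by (simp add: assoc_mult_mat[of U n n "adj U * A * U" n "adj U" n])
  also have "adj U * A * U * adj U = adj U * A"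
    using U UA by (simp add: assoc_mult_mat[of "adj U * A" n n U n "adj U" n] right_mult_one_mat[OF UA])
  also have "U * (adj U * A) = A"
    using U assms(2) by (simp add: assoc_mult_mat[of U n n "adj U" n A n, symmetric])
  finally show ?thesis .
qed

lemma unitary_mat_mult:
  assumes "unitary_mat n U" "unitary_mat n V"
  shows "unitary_mat n (U * V)"
proof (rule unitary_matI)
  have U: "U \<in> carrier_mat n n" and V: "V \<in> carrier_mat n n"
    using assms by (auto simp: unitary_mat_def)
  then show "U * V \<in> carrier_mat n n"
    by simp
  have "adj (U * V) * (U * V) = adj V * (adj U * (U * V))"
    using U V by (simp add: adj_mult[of _ n n] assoc_mult_mat[of _ n n _ n _ n])
  also have "\<dots> = 1\<^sub>m n"
    using assms V unitary_mat_cancel_left[OF assms(1) V] by (simp add: unitary_mat_def)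
  finally show "adj (U * V) * (U * V) = 1\<^sub>m n" .
qed

lemma unitary_mat_of_orthonormal_cols:
  assumes us: "length us = n" "set us \<subseteq> carrier_vec n" "orthonormal us"
  shows "unitary_mat n (mat_of_cols n us)"
proof (rule unitary_matI)
  let ?W = "mat_of_cols n us"
  show W: "?W \<in> carrier_mat n n"
    using us by auto
  show "adj ?W * ?W = 1\<^sub>m n"
  proof (rule eq_matI)
    fix i j
    assume "i < dim_row (1\<^sub>m n)" "j < dim_col (1\<^sub>m n)"
    then have i: "i < n" and j: "j < n" by auto
    moreover have "us ! i \<in> carrier_vec n" "us ! j \<in> carrier_vec n"
      using us i j by auto
    ultimately have "(adj ?W * ?W) $$ (i, j) = us ! j \<bullet>c us ! i"
      using W us by (auto simp: scalar_prod_def atLeast0LessThan mat_of_cols_def mult.commute intro!: sum.cong)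
    then show "(adj ?W * ?W) $$ (i, j) = 1\<^sub>m n $$ (i, j)"
      using us(1,3) i j by (auto simp: orthonormal_def)
  qed (use W in auto)
qed

lemma orthonormal_rescaling_of_corthogonal:
  assumes ws: "corthogonal ws" "set ws \<subseteq> carrier_vec n"
  shows "\<exists>us. length us = length ws \<and> set us \<subseteq> carrier_vec n \<and> orthonormal us \<and>
    (\<forall>i<length ws. \<exists>c. us ! i = c \<cdot>\<^sub>v ws ! i)"
proof -
  define r where "r w = Re (w \<bullet>c w)" for w :: "complex vec"
  have r: "ws ! i \<bullet>c ws ! i = complex_of_real (r (ws ! i))" "r (ws ! i) > 0"
    if "i < length ws" for i
  proof -
    have "ws ! i \<bullet>c ws ! i \<noteq> 0" "ws ! i \<bullet>c ws ! i \<ge> 0"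
      using corthogonalD[OF ws(1) that that] by auto
    then show "ws ! i \<bullet>c ws ! i = complex_of_real (r (ws ! i))" "r (ws ! i) > 0"
      by (auto simp: r_def less_eq_complex_def complex_eq_iff)
  qed
  define c where "c i = 1 / complex_of_real (sqrt (r (ws ! i)))" for i
  define us where "us = map (\<lambda>i. c i \<cdot>\<^sub>v ws ! i) [0..<length ws]"
  have ws_carrier: "ws ! i \<in> carrier_vec n" if "i < length ws" for i
    using ws(2) that by auto
  have "us ! i \<bullet>c us ! j = (if i = j then 1 else 0)" if i: "i < length ws" and j: "j < length ws" for i j
  proof -
    have "us ! i \<bullet>c us ! j = c i * cnj (c j) * (ws ! i \<bullet>c ws ! j)"
      using i j by (simp add: us_def cscalar_prod_smult[OF ws_carrier ws_carrier])
    then show ?thesis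
      using corthogonalD[OF ws(1) i j] r[OF i] by (auto simp: c_def simp flip: of_real_mult)
  qed
  moreover have "set us \<subseteq> carrier_vec n"
    using ws_carrier by (auto simp: us_def)
  ultimately show ?thesis
    by (intro exI[of _ us]) (auto simp: us_def orthonormal_def)
qed

lemma unitary_mat_with_first_column:
  assumes v: "v \<in> carrier_vec n" "v \<noteq> 0\<^sub>v n"
  shows "\<exists>W c. unitary_mat n W \<and> col W 0 = c \<cdot>\<^sub>v v"
proof -
  interpret cof_vec_space n "TYPE(complex)" .
  define b where "b = basis_completion v"
  from basis_completion[OF v, folded b_def]
  have b: "distinct b" "\<not> lin_dep (set b)" "set b \<subseteq> carrier_vec n" "hd b = v" "length b = n"
    by auto
  have "n \<noteq> 0"
    using v by (auto simp: vec_of_dim_0)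
  then obtain vs where bv: "b = v # vs"
    using b(4,5) by (cases b) auto
  define ws where "ws = gram_schmidt n b"
  have ws: "corthogonal ws" "set ws \<subseteq> carrier_vec n" "length ws = n"
    using gram_schmidt_result[OF b(3,1,2) ws_def] b(5) by auto
  moreover have "hd ws = v"
    using gram_schmidt_hd[OF v(1)] by (simp add: ws_def bv)
  ultimately have ws0: "ws ! 0 = v"
    using \<open>n \<noteq> 0\<close> by (cases ws) auto
  obtain us where us: "length us = n" "set us \<subseteq> carrier_vec n" "orthonormal us"
    and scaled: "\<forall>i<n. \<exists>c. us ! i = c \<cdot>\<^sub>v ws ! i"
    using orthonormal_rescaling_of_corthogonal[OF ws(1,2)] ws(3) by metis
  from \<open>n \<noteq> 0\<close> have "0 < n" by simp
  then obtain c where "us ! 0 = c \<cdot>\<^sub>v v"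
    using scaled ws0 by auto
  then have "col (mat_of_cols n us) 0 = c \<cdot>\<^sub>v v"
    using us v(1) \<open>0 < n\<close> by (subst col_mat_of_cols) auto
  then show ?thesis
    using unitary_mat_of_orthonormal_cols[OF us] by blast
qed

lemma unitary_conj_first_column:
  assumes A: "A \<in> carrier_mat n n" and W: "unitary_mat n W" and i: "i < n"
    and ev: "A *\<^sub>v col W 0 = e \<cdot>\<^sub>v col W 0"
  shows "(adj W * A * W) $$ (i, 0) = (if i = 0 then e else 0)"
proof -
  have Wc: "W \<in> carrier_mat n n" "adj W * W = 1\<^sub>m n"
    using W by (auto simp: unitary_mat_def)
  have "(adj W * A * W) $$ (i, 0) = row (adj W) i \<bullet> col (A * W) 0"
    using A Wc i by (simp add: assoc_mult_mat[of _ n n _ n _ n])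
  also have "col (A * W) 0 = A *\<^sub>v col W 0"
    using A Wc i by (intro col_mult2) auto
  also note ev
  also have "row (adj W) i \<bullet> (e \<cdot>\<^sub>v col W 0) = e * (row (adj W) i \<bullet> col W 0)"
    using Wc i by (simp add: scalar_prod_smult_distrib[of _ n])
  also have "row (adj W) i \<bullet> col W 0 = (adj W * W) $$ (i, 0)"
    using Wc(1) i by simp
  also have "(adj W * W) $$ (i, 0) = (if i = 0 then 1 else 0)"
    unfolding Wc(2) using i by simp
  finally show ?thesis
    by simp
qed

lemma hermitian_index:
  assumes "B \<in> carrier_mat n n" "adj B = B" "i < n" "j < n"
  shows "B $$ (i, j) = cnj (B $$ (j, i))"
  using assms by (metis adj_index carrier_matD)

lemma hermitian_deflation:
  assumes A: "A \<in> carrier_mat (Suc k) (Suc k)" "adj A = A"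
    and W: "unitary_mat (Suc k) W" and ev: "A *\<^sub>v col W 0 = e \<cdot>\<^sub>v col W 0"
  shows "\<exists>A'. A' \<in> carrier_mat k k \<and> adj A' = A' \<and>
    adj W * A * W = four_block_mat (mat 1 1 (\<lambda>_. e)) (0\<^sub>m 1 k) (0\<^sub>m k 1) A'"
proof -
  define B where "B = adj W * A * W"
  have B: "B \<in> carrier_mat (Suc k) (Suc k)" "adj B = B"
    using A W adj_congruence[of A "Suc k" W "Suc k"] unitary_mat_carrier[OF W] by (auto simp: B_def)
  note B_herm = hermitian_index[OF B]
  have col0: "B $$ (i, 0) = (if i = 0 then e else 0)" if "i < Suc k" for i
    unfolding B_def using unitary_conj_first_column[OF A(1) W that ev] .
  have "e = B $$ (0, 0)"
    using col0[of 0] by simp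
  also have "\<dots> = cnj (B $$ (0, 0))"
    by (rule B_herm) auto
  also have "\<dots> = cnj e"
    using col0[of 0] by simp
  finally have e_real: "cnj e = e" ..
  have row0: "B $$ (0, j) = (if j = 0 then e else 0)" if j: "j < Suc k" for j
  proof -
    have "B $$ (0, j) = cnj (B $$ (j, 0))"
      by (rule B_herm) (use j in auto)
    also have "\<dots> = (if j = 0 then e else 0)"
      using col0[OF j] e_real by simp
    finally show ?thesis .
  qed
  define A' where "A' = mat k k (\<lambda>(i, j). B $$ (Suc i, Suc j))"
  have "adj A' = A'"
  proof (rule eq_matI)
    fix i j
    assume "i < dim_row A'" "j < dim_col A'"
    then show "adj A' $$ (i, j) = A' $$ (i, j)"
      using B_herm[of "Suc i" "Suc j"] by (simp add: A'_def)
  qed (auto simp: A'_def)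
  moreover have "B = four_block_mat (mat 1 1 (\<lambda>_. e)) (0\<^sub>m 1 k) (0\<^sub>m k 1) A'"
    using B(1) col0 row0 by (intro eq_matI) (auto simp: A'_def)
  moreover have "A' \<in> carrier_mat k k"
    by (simp add: A'_def)
  ultimately show ?thesis
    unfolding B_def by blast
qed

lemma unitary_mat_four_block_one:
  assumes "unitary_mat k V"
  shows "unitary_mat (Suc k) (four_block_mat (1\<^sub>m 1) (0\<^sub>m 1 k) (0\<^sub>m k 1) V)"
proof (rule unitary_matI)
  have V: "V \<in> carrier_mat k k" "adj V * V = 1\<^sub>m k"
    using assms by (auto simp: unitary_mat_def)
  then show "four_block_mat (1\<^sub>m 1) (0\<^sub>m 1 k) (0\<^sub>m k 1) V \<in> carrier_mat (Suc k) (Suc k)"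
    by auto
  show "adj (four_block_mat (1\<^sub>m 1) (0\<^sub>m 1 k) (0\<^sub>m k 1) V) * four_block_mat (1\<^sub>m 1) (0\<^sub>m 1 k) (0\<^sub>m k 1) V
      = 1\<^sub>m (Suc k)"
    using V by (simp add: adj_four_block_mat[of _ 1 1 _ k _ k] mult_four_block_mat[of _ 1 1 _ k _ k _ _ 1 _ k])
qed

lemma four_block_one_conj:
  assumes "V \<in> carrier_mat k k" "D \<in> carrier_mat k k" "E \<in> carrier_mat 1 1"
  shows "four_block_mat (1\<^sub>m 1) (0\<^sub>m 1 k) (0\<^sub>m k 1) V * four_block_mat E (0\<^sub>m 1 k) (0\<^sub>m k 1) D
      * adj (four_block_mat (1\<^sub>m 1) (0\<^sub>m 1 k) (0\<^sub>m k 1) V)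
    = four_block_mat E (0\<^sub>m 1 k) (0\<^sub>m k 1) (V * D * adj V)"
proof -
  have "V * D * adj V \<in> carrier_mat k k"
    using assms by (meson adj_carrier mult_carrier_mat)
  then show ?thesis
    using assms by (simp add: adj_four_block_mat[of _ 1 1 _ k _ k] mult_four_block_mat[of _ 1 1 _ k _ k _ _ 1 _ k])
qed

lemma mat_diag_Suc_four_block:
  "mat_diag (Suc k) (\<lambda>i. if i = 0 then e else g (i - 1))
    = four_block_mat (mat 1 1 (\<lambda>_. e)) (0\<^sub>m 1 k) (0\<^sub>m k 1) (mat_diag k g)"
  by (rule eq_matI) (auto simp: mat_diag_def)

theorem hermitian_unitary_diagonalization:
  assumes "A \<in> carrier_mat n n" "adj A = A"
  shows "\<exists>U f. unitary_mat n U \<and> A = U * mat_diag n f * adj U"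
  using assms
proof (induction n arbitrary: A)
  case 0
  have "unitary_mat 0 (1\<^sub>m 0)"
    by (rule unitary_matI) auto
  moreover have "A = 1\<^sub>m 0 * mat_diag 0 f * adj (1\<^sub>m 0)" for f
    using 0 by (intro eq_matI) auto
  ultimately show ?case
    by blast
next
  case (Suc k)
  obtain e where "eigenvalue A e"
    using spectrum_non_empty[OF Suc.prems(1)] by (auto simp: spectrum_def)
  then obtain v where v: "v \<in> carrier_vec (Suc k)" "v \<noteq> 0\<^sub>v (Suc k)" "A *\<^sub>v v = e \<cdot>\<^sub>v v"
    using Suc.prems(1) by (auto simp: eigenvalue_def eigenvector_def)
  obtain W c where W: "unitary_mat (Suc k) W" "col W 0 = c \<cdot>\<^sub>v v"
    using unitary_mat_with_first_column[OF v(1,2)] by blast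
  have "A *\<^sub>v col W 0 = e \<cdot>\<^sub>v col W 0"
    using Suc.prems(1) v by (simp add: W(2) mult_mat_vec smult_smult_assoc mult.commute)
  then obtain A' where A': "A' \<in> carrier_mat k k" "adj A' = A'"
    and deflated: "adj W * A * W = four_block_mat (mat 1 1 (\<lambda>_. e)) (0\<^sub>m 1 k) (0\<^sub>m k 1) A'"
    using hermitian_deflation[OF Suc.prems W(1)] by blast
  obtain V g where V: "unitary_mat k V" and A'_diag: "A' = V * mat_diag k g * adj V"
    using Suc.IH[OF A'] by blast
  define V' where "V' = four_block_mat (1\<^sub>m 1) (0\<^sub>m 1 k) (0\<^sub>m k 1) V"
  define f where "f i = (if i = 0 then e else g (i - 1))" for i
  have "V' * mat_diag (Suc k) f * adj V'
      = four_block_mat (mat 1 1 (\<lambda>_. e)) (0\<^sub>m 1 k) (0\<^sub>m k 1) (V * mat_diag k g * adj V)"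
    unfolding V'_def f_def mat_diag_Suc_four_block
    by (rule four_block_one_conj) (use unitary_mat_carrier[OF V] in auto)
  then have "adj W * A * W = V' * mat_diag (Suc k) f * adj V'"
    by (simp add: deflated A'_diag)
  then have "A = W * (V' * mat_diag (Suc k) f * adj V') * adj W"
    using unitary_mat_adj_conj[OF W(1) Suc.prems(1)] by simp
  also have "\<dots> = (W * V') * mat_diag (Suc k) f * adj (W * V')"
    using unitary_mat_carrier[OF W(1)] unitary_mat_carrier[OF unitary_mat_four_block_one[OF V, folded V'_def]]
    by (simp add: adj_mult[of _ "Suc k" "Suc k"] assoc_mult_mat[of _ "Suc k" "Suc k" _ "Suc k" _ "Suc k"])
  finally have "A = (W * V') * mat_diag (Suc k) f * adj (W * V')" .
  moreover have "unitary_mat (Suc k) (W * V')"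
    using unitary_mat_mult[OF W(1) unitary_mat_four_block_one[OF V]] by (simp add: V'_def)
  ultimately show ?case
    by (intro exI[of _ "W * V'"] exI[of _ f] conjI)
qed

lemma unitary_mat_adj: "unitary_mat n U \<Longrightarrow> unitary_mat n (adj U)"
  by (auto simp: unitary_mat_def)

lemma quad_form_unit_vec:
  assumes "A \<in> carrier_mat n n" "i < n"
  shows "quad_form A (unit_vec n i) = A $$ (i, i)"
proof -
  have "conjugate (unit_vec n i) = (unit_vec n i :: complex vec)"
    by (rule eq_vecI) (auto simp: unit_vec_def)
  then show ?thesis
    using assms by (simp add: quad_form_def row_def)
qed

lemma psd_diag_nonneg: "psd A \<Longrightarrow> A \<in> carrier_mat n n \<Longrightarrow> i < n \<Longrightarrow> A $$ (i, i) \<ge> 0"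
  using psdD(2)[of A n "unit_vec n i"] quad_form_unit_vec[of A n i] by simp

lemma psd_sqrt_exists:
  assumes M: "psd M" "M \<in> carrier_mat n n"
  shows "\<exists>S. S \<in> carrier_mat n n \<and> psd S \<and> S * S = M"
proof -
  obtain U f where U: "unitary_mat n U" and M_diag: "M = U * mat_diag n f * adj U"
    using hermitian_unitary_diagonalization[OF M(2) psdD(1)[OF M]] by blast
  have Uc: "U \<in> carrier_mat n n"
    using U by (rule unitary_mat_carrier)
  have "mat_diag n f = adj U * M * U"
    using unitary_mat_adj_conj[OF unitary_mat_adj[OF U], of "mat_diag n f"] by (simp add: M_diag)
  then have "psd (mat_diag n f)"
    using psd_congruence[OF M Uc] by simp
  then have f: "f i = complex_of_real (Re (f i))" "Re (f i) \<ge> 0" if "i < n" for i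
    using psd_diag_nonneg[of "mat_diag n f" n i] that
    by (auto simp: mat_diag_def less_eq_complex_def complex_eq_iff)
  define g where "g i = complex_of_real (sqrt (Re (f i)))" for i
  define S where "S = U * mat_diag n g * adj U"
  have "S * S = U * (mat_diag n g * (adj U * U) * mat_diag n g) * adj U"
    using Uc by (simp add: S_def assoc_mult_mat[of _ n n _ n _ n])
  moreover have "mat_diag n (\<lambda>i. g i * g i) = mat_diag n f"
    by (rule eq_matI) (use f in \<open>auto simp: g_def mat_diag_def simp flip: of_real_mult\<close>)
  ultimately have "S * S = M"
    using U by (simp add: unitary_mat_def M_diag right_mult_one_mat[OF mat_diag_dim])
  moreover have "psd S"
    using psd_congruence[OF psd_mat_diag[of n g "\<lambda>i. sqrt (Re (f i))"] _ adj_carrier[OF Uc]] f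
    by (simp add: S_def g_def)
  moreover have "S \<in> carrier_mat n n"
    using Uc by (simp add: S_def)
  ultimately show ?thesis
    by blast
qed

lemma adj_square_congruence:
  assumes "G \<in> carrier_mat n n" "adj G = G" "D \<in> carrier_mat n k"
  shows "adj D * (G * G) * D = adj (G * D) * (G * D)"
proof -
  have "adj (G * D) = adj D * G"
    using assms by (simp add: adj_mult[of _ n n])
  then show ?thesis
    using assms by (simp add: assoc_mult_mat[of _ k n _ n _ k] assoc_mult_mat[of _ n n _ n _ k])
qed

lemma Re_mtrace_congruence_nonneg:
  assumes "psd S" "S \<in> carrier_mat n n" "D \<in> carrier_mat n k"
  shows "Re (mtrace (adj D * S * D)) \<ge> 0"
proof -
  obtain G where G: "G \<in> carrier_mat n n" "psd G" "G * G = S"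
    using psd_sqrt_exists[OF assms(1,2)] by blast
  have "adj D * S * D = adj (G * D) * (G * D)"
    using adj_square_congruence[OF G(1) psdD(1)[OF G(2,1)] assms(3)] G(3) by simp
  then show ?thesis
    using Re_mtrace_adj_mult_self_nonneg[of "G * D" n k] G assms(3) by simp
qed

lemma psd_mult_eq_0_if_Re_mtrace_congruence_le_0:
  assumes "psd S" "S \<in> carrier_mat n n" "D \<in> carrier_mat n k"
    and "Re (mtrace (adj D * S * D)) \<le> 0"
  shows "S * D = 0\<^sub>m n k"
proof -
  obtain G where G: "G \<in> carrier_mat n n" "psd G" "G * G = S"
    using psd_sqrt_exists[OF assms(1,2)] by blast
  have "adj D * S * D = adj (G * D) * (G * D)"
    using adj_square_congruence[OF G(1) psdD(1)[OF G(2,1)] assms(3)] G(3) by simp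
  then have "G * D = 0\<^sub>m n k"
    using zero_if_Re_mtrace_adj_mult_self_le_0[of "G * D" n k] G assms by simp
  have "S * D = G * (G * D)"
    using G(1,3) assms(3) assoc_mult_mat[of G n n G n D k] by simp
  also have "\<dots> = 0\<^sub>m n k"
    using \<open>G * D = 0\<^sub>m n k\<close> G(1) by simp
  finally show ?thesis .
qed

text \<open>For D = S - T the hypothesis gives S D = - D T, so Tr (D S D) = - Tr (D T D); both traces
are nonnegative, which forces S D = T D = 0 and then D^2 = 0.\<close>

lemma psd_sqrt_unique:
  assumes S: "S \<in> carrier_mat n n" "psd S" and T: "T \<in> carrier_mat n n" "psd T"
    and ST: "S * S = T * T"
  shows "S = T"
proof -
  define D where "D = S - T"
  have D: "D \<in> carrier_mat n n" "adj D = D"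
    using S T psdD(1)[OF S(2,1)] psdD(1)[OF T(2,1)] by (auto simp: D_def adj_minus)
  have "S * D * D = - (D * T * D)"
  proof -
    have "S * D = - (D * T)"
      using S T ST by (intro eq_matI) (auto simp: D_def mult_minus_distrib_mat minus_mult_distrib_mat)
    then show ?thesis
      using D T by (intro eq_matI) auto
  qed
  then have "mtrace (adj D * S * D) = - mtrace (adj D * T * D)"
    using D S T mtrace_mult_comm[of "S * D" n n D] mtrace_uminus[of "D * T * D" n]
    by (simp add: assoc_mult_mat[of _ n n _ n _ n])
  then have "Re (mtrace (adj D * S * D)) \<le> 0" "Re (mtrace (adj D * T * D)) \<le> 0"
    using Re_mtrace_congruence_nonneg[OF S(2,1) D(1)] Re_mtrace_congruence_nonneg[OF T(2,1) D(1)] by auto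
  then have "S * D = 0\<^sub>m n n" "T * D = 0\<^sub>m n n"
    using psd_mult_eq_0_if_Re_mtrace_congruence_le_0 S T D(1) by blast+
  moreover have "D * D = S * D - T * D"
    unfolding D_def by (rule minus_mult_distrib_mat) (use S T in auto)
  ultimately have "adj D * D = 0\<^sub>m n n"
    using D by auto
  then have "D = 0\<^sub>m n n"
    using zero_if_Re_mtrace_adj_mult_self_le_0[OF D(1)] by (simp add: mtrace_def)
  moreover have "S = D + T"
    using S T by (intro eq_matI) (auto simp: D_def)
  ultimately show ?thesis
    using T by simp
qed

lemma msqrt_eq:
  assumes "M \<in> carrier_mat n n" "S \<in> carrier_mat n n" "psd S" "S * S = M"
  shows "msqrt M = S"
  unfolding msqrt_def
proof (rule the_equality)
  show "S \<in> carrier_mat (dim_row M) (dim_row M) \<and> psd S \<and> S * S = M"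
    using assms by auto
  fix S'
  assume "S' \<in> carrier_mat (dim_row M) (dim_row M) \<and> psd S' \<and> S' * S' = M"
  then show "S' = S"
    using psd_sqrt_unique[of S' n S] assms by auto
qed

lemma msqrt:
  assumes "psd M" "M \<in> carrier_mat n n"
  shows "msqrt M \<in> carrier_mat n n" "psd (msqrt M)" "msqrt M * msqrt M = M"
  using psd_sqrt_exists[OF assms] msqrt_eq[OF assms(2)] by auto

section \<open>Kronecker products\<close>

lemma mod_less_of_less_mult [simp]: "i < a * (b::nat) \<Longrightarrow> i mod b < b"
  by (metis mod_less_divisor mult_0_right not_less0 gr0I)

lemma div_less_of_less_mult [simp]: "i < a * (b::nat) \<Longrightarrow> i div b < a"
  by (simp add: less_mult_imp_div_less)

lemma sum_lessThan_mult:
  fixes a b :: nat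
  shows "(\<Sum>i<a * b. f i) = (\<Sum>x<a. \<Sum>y<b. f (x * b + y))"
proof (induction a)
  case (Suc a)
  have split: "(\<Sum>i<m + k. f i) = (\<Sum>i<m. f i) + (\<Sum>i<k. f (m + i))" for m k :: nat
    by (induction k) (auto simp: add.assoc)
  have "(\<Sum>i<Suc a * b. f i) = (\<Sum>i<a * b + b. f i)"
    by (simp add: add.commute)
  also have "\<dots> = (\<Sum>i<a * b. f i) + (\<Sum>y<b. f (a * b + y))"
    by (rule split)
  finally show ?case
    using Suc by simp
qed simp

lemma kron_dims [simp]:
  "dim_row (kron A B) = dim_row A * dim_row B" "dim_col (kron A B) = dim_col A * dim_col B"
  by (auto simp: kron_def)

lemma kron_carrier [simp]:
  "A \<in> carrier_mat n1 m1 \<Longrightarrow> B \<in> carrier_mat n2 m2 \<Longrightarrow> kron A B \<in> carrier_mat (n1 * n2) (m1 * m2)"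
  by (metis carrier_matD carrier_matI kron_dims)

lemma kron_index:
  "i < dim_row A * dim_row B \<Longrightarrow> j < dim_col A * dim_col B \<Longrightarrow>
    kron A B $$ (i, j) = A $$ (i div dim_row B, j div dim_col B) * B $$ (i mod dim_row B, j mod dim_col B)"
  by (simp add: kron_def)

lemma kron_mult:
  assumes A: "A \<in> carrier_mat n1 k1" and B: "B \<in> carrier_mat n2 k2"
    and C: "C \<in> carrier_mat k1 m1" and D: "D \<in> carrier_mat k2 m2"
  shows "kron A B * kron C D = kron (A * C) (B * D)"
proof (rule eq_matI)
  fix i j
  assume "i < dim_row (kron (A * C) (B * D))" "j < dim_col (kron (A * C) (B * D))"
  then have i: "i < n1 * n2" and j: "j < m1 * m2"
    using A B C D by auto
  then have "i div n2 < n1" "j div m2 < m1" "n2 > 0" "m2 > 0"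
    by (auto simp: less_mult_imp_div_less intro: gr0I)
  have "(kron A B * kron C D) $$ (i, j) =
      (\<Sum>l<k1 * k2. (A $$ (i div n2, l div k2) * B $$ (i mod n2, l mod k2)) *
                 (C $$ (l div k2, j div m2) * D $$ (l mod k2, j mod m2)))"
    using A B C D i j by (simp add: scalar_prod_def atLeast0LessThan kron_index)
  also have "\<dots> = (\<Sum>x<k1. A $$ (i div n2, x) * C $$ (x, j div m2)) *
      (\<Sum>y<k2. B $$ (i mod n2, y) * D $$ (y, j mod m2))"
    by (simp add: sum_lessThan_mult sum_product mult_ac)
  also have "\<dots> = kron (A * C) (B * D) $$ (i, j)"
    using A B C D i j \<open>i div n2 < n1\<close> \<open>j div m2 < m1\<close> \<open>n2 > 0\<close> \<open>m2 > 0\<close>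
    by (simp add: kron_index scalar_prod_def atLeast0LessThan)
  finally show "(kron A B * kron C D) $$ (i, j) = kron (A * C) (B * D) $$ (i, j)" .
qed (use A B C D in auto)

lemma adj_kron: "adj (kron A B) = kron (adj A) (adj B)"
proof (rule eq_matI)
  fix i j
  assume "i < dim_row (kron (adj A) (adj B))" "j < dim_col (kron (adj A) (adj B))"
  then have "i < dim_col A * dim_col B" "j < dim_row A * dim_row B"
    by auto
  moreover from this have "dim_col B > 0" "dim_row B > 0"
    by (auto intro: gr0I)
  ultimately show "adj (kron A B) $$ (i, j) = kron (adj A) (adj B) $$ (i, j)"
    by (simp add: kron_index less_mult_imp_div_less)
qed auto

lemma kron_smult_left: "kron (c \<cdot>\<^sub>m A) B = c \<cdot>\<^sub>m kron A B"
  by (rule eq_matI) (auto simp: kron_index less_mult_imp_div_less)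

lemma kron_zero_right: "kron A (0\<^sub>m n m) = 0\<^sub>m (dim_row A * n) (dim_col A * m)"
  by (rule eq_matI) (auto simp: kron_index)

lemma mtrace_kron:
  assumes "A \<in> carrier_mat n1 n1" "B \<in> carrier_mat n2 n2"
  shows "mtrace (kron A B) = mtrace A * mtrace B"
  using assms by (simp add: mtrace_def kron_index sum_lessThan_mult sum_product)

lemma psd_kron:
  assumes A: "psd A" "A \<in> carrier_mat n1 n1" and B: "psd B" "B \<in> carrier_mat n2 n2"
  shows "psd (kron A B)"
proof -
  let ?G = "kron (msqrt A) (msqrt B)"
  have "kron A B = adj ?G * ?G"
    using msqrt[OF A] msqrt[OF B] psdD(1)[OF msqrt(2,1)[OF A]] psdD(1)[OF msqrt(2,1)[OF B]]
    by (simp add: adj_kron kron_mult)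
  then show ?thesis
    using psd_adj_mult_self[of ?G "n1 * n2" "n1 * n2"] msqrt(1)[OF A] msqrt(1)[OF B] by simp
qed

lemma adj_mult_self_kron_sum:
  assumes A: "A1 \<in> carrier_mat n n" "A2 \<in> carrier_mat n n"
    and B: "B1 \<in> carrier_mat k k" "B2 \<in> carrier_mat k k"
    and orth: "adj B1 * B2 = 0\<^sub>m k k" "adj B2 * B1 = 0\<^sub>m k k"
  shows "adj (kron A1 B1 + kron A2 B2) * (kron A1 B1 + kron A2 B2)
    = kron (adj A1 * A1) (adj B1 * B1) + kron (adj A2 * A2) (adj B2 * B2)"
proof -
  have K: "kron A1 B1 \<in> carrier_mat (n * k) (n * k)" "kron A2 B2 \<in> carrier_mat (n * k) (n * k)"
    "adj (kron A1 B1) \<in> carrier_mat (n * k) (n * k)" "adj (kron A2 B2) \<in> carrier_mat (n * k) (n * k)"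
    using A B by auto
  have prod: "adj (kron Ai Bi) * kron Aj Bj = kron (adj Ai * Aj) (adj Bi * Bj)"
    if "Ai \<in> carrier_mat n n" "Aj \<in> carrier_mat n n" "Bi \<in> carrier_mat k k" "Bj \<in> carrier_mat k k"
    for Ai Aj Bi Bj
    using that by (simp add: adj_kron kron_mult[of _ n n _ k k])
  have "adj (kron A1 B1 + kron A2 B2) * (kron A1 B1 + kron A2 B2)
      = (adj (kron A1 B1) * kron A1 B1 + adj (kron A2 B2) * kron A1 B1)
        + (adj (kron A1 B1) * kron A2 B2 + adj (kron A2 B2) * kron A2 B2)"
    using K by (simp add: adj_add[of _ "n * k" "n * k"] add_mult_distrib_mat[of _ "n * k" "n * k"]
        mult_add_distrib_mat[of _ "n * k" "n * k"])
  also have "\<dots> = kron (adj A1 * A1) (adj B1 * B1) + kron (adj A2 * A2) (adj B2 * B2)"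
    using A B orth by (simp add: prod kron_zero_right)
  finally show ?thesis .
qed

section \<open>Maps acting on the first tensor factor\<close>

lemma mult_add_less_mult:
  assumes "a < d" "b < n"
  shows "a * n + b < d * (n::nat)"
proof -
  have "Suc a * n \<le> d * n"
    using assms(1) by (intro mult_le_mono1) simp
  then show ?thesis
    using assms(2) by simp
qed

lemma block_dims [simp]: "dim_row (block d n b c X) = d" "dim_col (block d n b c X) = d"
  by (simp_all add: block_def)

lemma block_carrier [simp]: "block d n b c X \<in> carrier_mat d d"
  by (simp add: block_def)

lemma tensor_id_dims [simp]:
  "dim_row (tensor_id d d' n \<Lambda> X) = d' * n" "dim_col (tensor_id d d' n \<Lambda> X) = d' * n"
  by (simp_all add: tensor_id_def)

lemma tensor_id_carrier [simp]: "tensor_id d d' n \<Lambda> X \<in> carrier_mat (d' * n) (d' * n)"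
  by (simp add: tensor_id_def)

lemma tensor_id_index:
  "i < d' * n \<Longrightarrow> j < d' * n \<Longrightarrow>
    tensor_id d d' n \<Lambda> X $$ (i, j) = \<Lambda> (block d n (i mod n) (j mod n) X) $$ (i div n, j div n)"
  by (simp add: tensor_id_def)

lemma cptpD:
  assumes "cptp d d' \<Lambda>"
  shows "\<And>X. X \<in> carrier_mat d d \<Longrightarrow> \<Lambda> X \<in> carrier_mat d' d'"
    "\<And>X Y. X \<in> carrier_mat d d \<Longrightarrow> Y \<in> carrier_mat d d \<Longrightarrow> \<Lambda> (X + Y) = \<Lambda> X + \<Lambda> Y"
    "\<And>c X. X \<in> carrier_mat d d \<Longrightarrow> \<Lambda> (c \<cdot>\<^sub>m X) = c \<cdot>\<^sub>m \<Lambda> X"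
    "\<And>X. X \<in> carrier_mat d d \<Longrightarrow> mtrace (\<Lambda> X) = mtrace X"
    "\<And>n X. X \<in> carrier_mat (d * n) (d * n) \<Longrightarrow> psd X \<Longrightarrow> psd (tensor_id d d' n \<Lambda> X)"
  using assms unfolding cptp_def by auto

lemma cptp_dims:
  assumes "cptp d d' \<Lambda>" "X \<in> carrier_mat d d"
  shows "dim_row (\<Lambda> X) = d'" "dim_col (\<Lambda> X) = d'"
  using cptpD(1)[OF assms] by auto

lemma tensor_id_add:
  assumes L: "cptp d d' \<Lambda>" and X: "X \<in> carrier_mat (d * n) (d * n)" and Y: "Y \<in> carrier_mat (d * n) (d * n)"
  shows "tensor_id d d' n \<Lambda> (X + Y) = tensor_id d d' n \<Lambda> X + tensor_id d d' n \<Lambda> Y"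
proof (rule eq_matI)
  fix i j
  assume "i < dim_row (tensor_id d d' n \<Lambda> X + tensor_id d d' n \<Lambda> Y)"
    "j < dim_col (tensor_id d d' n \<Lambda> X + tensor_id d d' n \<Lambda> Y)"
  then have ij: "i < d' * n" "j < d' * n"
    by auto
  have "block d n (i mod n) (j mod n) (X + Y) = block d n (i mod n) (j mod n) X + block d n (i mod n) (j mod n) Y"
    using X Y ij by (intro eq_matI) (auto simp: block_def mult_add_less_mult)
  then show "tensor_id d d' n \<Lambda> (X + Y) $$ (i, j) = (tensor_id d d' n \<Lambda> X + tensor_id d d' n \<Lambda> Y) $$ (i, j)"
    using ij by (simp add: tensor_id_index cptpD(2)[OF L] cptp_dims[OF L])
qed auto

lemma tensor_id_smult:
  assumes L: "cptp d d' \<Lambda>" and X: "X \<in> carrier_mat (d * n) (d * n)"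
  shows "tensor_id d d' n \<Lambda> (c \<cdot>\<^sub>m X) = c \<cdot>\<^sub>m tensor_id d d' n \<Lambda> X"
proof (rule eq_matI)
  fix i j
  assume "i < dim_row (c \<cdot>\<^sub>m tensor_id d d' n \<Lambda> X)" "j < dim_col (c \<cdot>\<^sub>m tensor_id d d' n \<Lambda> X)"
  then have ij: "i < d' * n" "j < d' * n"
    by auto
  have "block d n (i mod n) (j mod n) (c \<cdot>\<^sub>m X) = c \<cdot>\<^sub>m block d n (i mod n) (j mod n) X"
    using X ij by (intro eq_matI) (auto simp: block_def mult_add_less_mult)
  then show "tensor_id d d' n \<Lambda> (c \<cdot>\<^sub>m X) $$ (i, j) = (c \<cdot>\<^sub>m tensor_id d d' n \<Lambda> X) $$ (i, j)"
    using ij by (simp add: tensor_id_index cptpD(3)[OF L] cptp_dims[OF L])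
qed auto

lemma tensor_id_minus:
  assumes L: "cptp d d' \<Lambda>" and X: "X \<in> carrier_mat (d * n) (d * n)" and Y: "Y \<in> carrier_mat (d * n) (d * n)"
  shows "tensor_id d d' n \<Lambda> (X - Y) = tensor_id d d' n \<Lambda> X - tensor_id d d' n \<Lambda> Y"
proof -
  have minus: "A - B = A + (-1) \<cdot>\<^sub>m B" if "A \<in> carrier_mat k k" "B \<in> carrier_mat k k"
    for A B :: "complex mat" and k
    using that by (intro eq_matI) auto
  show ?thesis
    using X Y by (simp add: minus[of _ "d * n"] minus[of _ "d' * n"] tensor_id_add[OF L] tensor_id_smult[OF L])
qed

lemma mtrace_tensor_id:
  assumes L: "cptp d d' \<Lambda>" and X: "X \<in> carrier_mat (d * n) (d * n)"
  shows "mtrace (tensor_id d d' n \<Lambda> X) = mtrace X"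
proof -
  have "mtrace (tensor_id d d' n \<Lambda> X) = (\<Sum>a<d'. \<Sum>b<n. \<Lambda> (block d n b b X) $$ (a, a))"
    by (simp add: mtrace_def tensor_id_index sum_lessThan_mult)
  also have "\<dots> = (\<Sum>b<n. mtrace (\<Lambda> (block d n b b X)))"
    by (subst sum.swap) (simp add: mtrace_def cptp_dims[OF L])
  also have "\<dots> = (\<Sum>b<n. mtrace (block d n b b X))"
    by (simp add: cptpD(4)[OF L])
  also have "\<dots> = (\<Sum>b<n. \<Sum>a<d. X $$ (a * n + b, a * n + b))"
    by (simp add: mtrace_def block_def)
  also have "\<dots> = mtrace X"
    using X by (subst sum.swap) (simp add: mtrace_def sum_lessThan_mult)
  finally show ?thesis .
qed

lemma block_kron:
  assumes X: "X \<in> carrier_mat (d * m) (d * m)" and Q: "Q \<in> carrier_mat k k"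
    and "0 < m" "0 < k"
  shows "block d (m * k) (i mod (m * k)) (j mod (m * k)) (kron X Q)
    = Q $$ (i mod k, j mod k) \<cdot>\<^sub>m block d m (i div k mod m) (j div k mod m) X"
proof (rule eq_matI)
  have regroup: "(a * (m * k) + l mod (m * k)) div k = a * m + l div k mod m"
    "(a * (m * k) + l mod (m * k)) mod k = l mod k" for a l
  proof -
    have "a * (m * k) + l mod (m * k) = (a * m + l div k mod m) * k + l mod k"
      using mod_mult2_eq[of l k m] by (simp add: algebra_simps)
    then show "(a * (m * k) + l mod (m * k)) div k = a * m + l div k mod m"
      "(a * (m * k) + l mod (m * k)) mod k = l mod k"
      using assms(4) by simp_all
  qed
  fix a a'
  assume "a < dim_row (Q $$ (i mod k, j mod k) \<cdot>\<^sub>m block d m (i div k mod m) (j div k mod m) X)"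
    "a' < dim_col (Q $$ (i mod k, j mod k) \<cdot>\<^sub>m block d m (i div k mod m) (j div k mod m) X)"
  then have "a < d" "a' < d"
    by auto
  then have "a * (m * k) + i mod (m * k) < d * m * k" "a' * (m * k) + j mod (m * k) < d * m * k"
    using assms(3,4) by (simp_all add: mult_add_less_mult mult.assoc)
  then show "block d (m * k) (i mod (m * k)) (j mod (m * k)) (kron X Q) $$ (a, a')
      = (Q $$ (i mod k, j mod k) \<cdot>\<^sub>m block d m (i div k mod m) (j div k mod m) X) $$ (a, a')"
    using X Q \<open>a < d\<close> \<open>a' < d\<close> by (simp add: block_def kron_index regroup)
qed auto

lemma tensor_id_kron:
  assumes L: "cptp d d' \<Lambda>" and X: "X \<in> carrier_mat (d * m) (d * m)" and Q: "Q \<in> carrier_mat k k"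
  shows "tensor_id d d' (m * k) \<Lambda> (kron X Q) = kron (tensor_id d d' m \<Lambda> X) Q"
proof (rule eq_matI)
  fix i j
  assume "i < dim_row (kron (tensor_id d d' m \<Lambda> X) Q)" "j < dim_col (kron (tensor_id d d' m \<Lambda> X) Q)"
  then have ij: "i < d' * (m * k)" "j < d' * (m * k)"
    using Q by (auto simp: mult.assoc)
  then have "0 < m" "0 < k"
    by (auto intro: gr0I)
  have "i div k < d' * m" "j div k < d' * m" "i div (m * k) < d'" "j div (m * k) < d'"
    using ij by (simp_all add: less_mult_imp_div_less mult.assoc)
  then have "tensor_id d d' (m * k) \<Lambda> (kron X Q) $$ (i, j)
      = Q $$ (i mod k, j mod k) * tensor_id d d' m \<Lambda> X $$ (i div k, j div k)"
    using ij block_kron[OF X Q \<open>0 < m\<close> \<open>0 < k\<close>]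
    by (simp add: tensor_id_index cptpD(3)[OF L] cptp_dims[OF L] div_mult2_eq[of _ k m] mult.commute)
  then show "tensor_id d d' (m * k) \<Lambda> (kron X Q) $$ (i, j) = kron (tensor_id d d' m \<Lambda> X) Q $$ (i, j)"
    using ij Q by (simp add: kron_index mult.assoc)
qed (use Q in \<open>auto simp: mult.assoc\<close>)

section \<open>Partial transpose of a Bell mixture\<close>

lemma ptrans2_index_less:
  fixes n1 n2 :: nat
  assumes "i < n1 * n2" "j < n1 * n2"
  shows "i div n2 * n2 + j mod n2 < n1 * n2"
  using assms by (intro mult_add_less_mult) auto

lemma ptrans2_add:
  assumes "X \<in> carrier_mat (n1 * n2) (n1 * n2)" "Y \<in> carrier_mat (n1 * n2) (n1 * n2)"
  shows "ptrans2 n1 n2 (X + Y) = ptrans2 n1 n2 X + ptrans2 n1 n2 Y"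
  using assms by (intro eq_matI) (auto simp: ptrans2_def ptrans2_index_less)

lemma ptrans2_kron:
  assumes X: "X \<in> carrier_mat n n" and B: "B \<in> carrier_mat (k * l) (k * l)"
  shows "ptrans2 (n * k) l (kron X B) = kron X (ptrans2 k l B)"
proof (rule eq_matI)
  fix i j
  assume "i < dim_row (kron X (ptrans2 k l B))" "j < dim_col (kron X (ptrans2 k l B))"
  then have ij: "i < n * k * l" "j < n * k * l"
    using X by (auto simp: ptrans2_def)
  then have "0 < l"
    by (auto intro: gr0I)
  have regroup: "(p div l * l + q mod l) div (k * l) = p div (k * l)"
    "(p div l * l + q mod l) mod (k * l) = (p mod (k * l)) div l * l + (q mod (k * l)) mod l" for p q
  proof -
    have "(p div l * l + q mod l) div l = p div l" "(p div l * l + q mod l) mod l = q mod l"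
      using \<open>0 < l\<close> by simp_all
    then show "(p div l * l + q mod l) div (k * l) = p div (k * l)"
      "(p div l * l + q mod l) mod (k * l) = (p mod (k * l)) div l * l + (q mod (k * l)) mod l"
      using mod_mult2_eq[of p l k] mod_mult2_eq[of "p div l * l + q mod l" l k] mod_mult2_eq[of q l k]
        div_mult2_eq[of p l k] div_mult2_eq[of "p div l * l + q mod l" l k] \<open>0 < l\<close>
      by (simp_all add: mult.commute)
  qed
  show "ptrans2 (n * k) l (kron X B) $$ (i, j) = kron X (ptrans2 k l B) $$ (i, j)"
    using ij X B ptrans2_index_less[of i "n * k" l j] ptrans2_index_less[of j "n * k" l i]
      ptrans2_index_less[of "i mod (k * l)" k l "j mod (k * l)"] ptrans2_index_less[of "j mod (k * l)" k l "i mod (k * l)"]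
    by (simp add: ptrans2_def kron_index regroup mult.assoc)
qed (use X in \<open>auto simp: ptrans2_def\<close>)

text \<open>In the basis |00\<rangle>, |01\<rangle>, |10\<rangle>, |11\<rangle>: the partial transposes of the two Bell projectors are
half_odd_proj \<plusminus> half_even_flip, and half_even_proj is the modulus of half_even_flip.\<close>

definition half_odd_proj :: "complex mat" where
  "half_odd_proj = mat_diag 4 (\<lambda>i. if i = 1 \<or> i = 2 then 1 / 2 else 0)"

definition half_even_proj :: "complex mat" where
  "half_even_proj = mat_diag 4 (\<lambda>i. if i = 0 \<or> i = 3 then 1 / 2 else 0)"

definition half_even_flip :: "complex mat" where
  "half_even_flip = mat 4 4 (\<lambda>(i, j). if (i, j) = (0, 3) \<or> (i, j) = (3, 0) then 1 / 2 else 0)"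

lemma less_4_cases: "(i::nat) < 4 \<Longrightarrow> i = 0 \<or> i = 1 \<or> i = 2 \<or> i = 3"
  by presburger

lemma sum_lessThan_4: "(\<Sum>l\<in>{0..<4::nat}. f l) = f 0 + f 1 + f 2 + f 3"
  by (simp add: numeral_eq_Suc atLeast0LessThan lessThan_Suc add_ac)

lemmas bell_block_defs = half_odd_proj_def half_even_proj_def half_even_flip_def
  psi_plus_proj_def psi_minus_proj_def ptrans2_def mat_diag_def

lemma bell_block_carrier [simp]:
  "half_odd_proj \<in> carrier_mat 4 4" "half_even_proj \<in> carrier_mat 4 4" "half_even_flip \<in> carrier_mat 4 4"
  "psi_plus_proj \<in> carrier_mat (2 * 2) (2 * 2)" "psi_minus_proj \<in> carrier_mat (2 * 2) (2 * 2)"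
  by (auto simp: bell_block_defs)

lemma bell_block_dims [simp]:
  "dim_row half_odd_proj = 4" "dim_col half_odd_proj = 4" "dim_row half_even_flip = 4" "dim_col half_even_flip = 4"
  by (auto simp: bell_block_defs)

lemma ptrans2_psi_plus_proj: "ptrans2 2 2 psi_plus_proj = half_odd_proj + half_even_flip"
proof (rule eq_matI)
  fix i j
  assume "i < dim_row (half_odd_proj + half_even_flip)" "j < dim_col (half_odd_proj + half_even_flip)"
  then have "i < 4" "j < 4"
    by auto
  then show "ptrans2 2 2 psi_plus_proj $$ (i, j) = (half_odd_proj + half_even_flip) $$ (i, j)"
    using less_4_cases[of i] less_4_cases[of j] by (auto simp: bell_block_defs)
qed (auto simp: ptrans2_def)

lemma ptrans2_psi_minus_proj: "ptrans2 2 2 psi_minus_proj = half_odd_proj - half_even_flip"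
proof (rule eq_matI)
  fix i j
  assume "i < dim_row (half_odd_proj - half_even_flip)" "j < dim_col (half_odd_proj - half_even_flip)"
  then have "i < 4" "j < 4"
    by auto
  then show "ptrans2 2 2 psi_minus_proj $$ (i, j) = (half_odd_proj - half_even_flip) $$ (i, j)"
    using less_4_cases[of i] less_4_cases[of j] by (auto simp: bell_block_defs)
qed (auto simp: ptrans2_def)

lemma bell_block_products:
  "adj half_odd_proj * half_even_flip = 0\<^sub>m 4 4" "adj half_even_flip * half_odd_proj = 0\<^sub>m 4 4"
  "adj half_odd_proj * half_even_proj = 0\<^sub>m 4 4" "adj half_even_proj * half_odd_proj = 0\<^sub>m 4 4"
  "adj half_even_proj * half_even_proj = adj half_even_flip * half_even_flip"
  by (rule eq_matI; auto simp: bell_block_defs scalar_prod_def sum_lessThan_4 dest!: less_4_cases)+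

lemma psd_half_odd_proj: "psd half_odd_proj"
  unfolding half_odd_proj_def by (rule psd_mat_diag[of _ _ "\<lambda>i. if i = 1 \<or> i = 2 then 1 / 2 else 0"]) auto

lemma psd_half_even_proj: "psd half_even_proj"
  unfolding half_even_proj_def by (rule psd_mat_diag[of _ _ "\<lambda>i. if i = 0 \<or> i = 3 then 1 / 2 else 0"]) auto

lemma mtrace_half_proj: "mtrace half_odd_proj = 1" "mtrace half_even_proj = 1"
  by (auto simp: mtrace_def bell_block_defs numeral_eq_Suc lessThan_Suc)

lemma ptrans2_bell_mixture:
  assumes X: "X \<in> carrier_mat n n" and Y: "Y \<in> carrier_mat n n"
  shows "ptrans2 (n * 2) 2 (kron X psi_plus_proj + kron Y psi_minus_proj)
    = kron (X + Y) half_odd_proj + kron (X - Y) half_even_flip"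
proof -
  have "kron X psi_plus_proj \<in> carrier_mat (n * 2 * 2) (n * 2 * 2)"
    "kron Y psi_minus_proj \<in> carrier_mat (n * 2 * 2) (n * 2 * 2)"
    using kron_carrier[OF X bell_block_carrier(4)] kron_carrier[OF Y bell_block_carrier(5)]
    by (simp_all only: mult.assoc)
  then have "ptrans2 (n * 2) 2 (kron X psi_plus_proj + kron Y psi_minus_proj)
      = kron X (half_odd_proj + half_even_flip) + kron Y (half_odd_proj - half_even_flip)"
    by (simp only: ptrans2_add ptrans2_kron[OF X bell_block_carrier(4)] ptrans2_kron[OF Y bell_block_carrier(5)]
      ptrans2_psi_plus_proj ptrans2_psi_minus_proj)
  also have "\<dots> = kron (X + Y) half_odd_proj + kron (X - Y) half_even_flip"
    using X Y by (intro eq_matI) (auto simp: kron_index algebra_simps)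
  finally show ?thesis .
qed

lemma trace_norm_bell_block_sum:
  assumes W: "psd W" "W \<in> carrier_mat n n" and Z: "Z \<in> carrier_mat n n"
  shows "trace_norm (kron W half_odd_proj + kron Z half_even_flip) = Re (mtrace W) + trace_norm Z"
proof -
  let ?P = "kron W half_odd_proj + kron Z half_even_flip"
  define R where "R = msqrt (adj Z * Z)"
  have R: "R \<in> carrier_mat n n" "psd R" "R * R = adj Z * Z"
    using msqrt[OF psd_adj_mult_self[OF Z] mult_carrier_mat[OF adj_carrier[OF Z] Z]] by (auto simp: R_def)
  define S where "S = kron W half_odd_proj + kron R half_even_proj"
  have S: "S \<in> carrier_mat (n * 4) (n * 4)" "psd S"
    using psd_add[OF psd_kron[OF W psd_half_odd_proj bell_block_carrier(1)]
      psd_kron[OF R(2,1) psd_half_even_proj bell_block_carrier(2)]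
      kron_carrier[OF W(2) bell_block_carrier(1)] kron_carrier[OF R(1) bell_block_carrier(2)]]
      W R by (auto simp: S_def)
  have "S * S = adj S * S"
    using psdD(1)[OF S(2,1)] by simp
  also have "\<dots> = kron (adj W * W) (adj half_odd_proj * half_odd_proj)
      + kron (adj R * R) (adj half_even_proj * half_even_proj)"
    unfolding S_def
    by (rule adj_mult_self_kron_sum[OF W(2) R(1) bell_block_carrier(1,2) bell_block_products(3,4)])
  also have "\<dots> = kron (adj W * W) (adj half_odd_proj * half_odd_proj)
      + kron (adj Z * Z) (adj half_even_flip * half_even_flip)"
    using psdD(1)[OF R(2,1)] R(3) bell_block_products(5) by simp
  also have "\<dots> = adj ?P * ?P"
    by (rule adj_mult_self_kron_sum[OF W(2) Z bell_block_carrier(1,3) bell_block_products(1,2), symmetric])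
  finally have "msqrt (adj ?P * ?P) = S"
    using S W Z by (intro msqrt_eq[of _ "n * 4"]) auto
  then have "trace_norm ?P = Re (mtrace S)"
    by (simp add: trace_norm_def)
  also have "\<dots> = Re (mtrace W) + Re (mtrace R)"
    using W R by (simp add: S_def mtrace_add[of _ "n * 4"] mtrace_kron[of _ n _ 4] mtrace_half_proj)
  finally show ?thesis
    by (simp add: trace_norm_def R_def)
qed

lemma tensor_id_bell_mixture:
  assumes L: "cptp d d' \<Lambda>"
    and \<rho>1: "\<rho>1 \<in> carrier_mat (d * m) (d * m)" and \<rho>2: "\<rho>2 \<in> carrier_mat (d * m) (d * m)"
  shows "tensor_id d d' (m * 4) \<Lambda> (c1 \<cdot>\<^sub>m kron \<rho>1 psi_plus_proj + c2 \<cdot>\<^sub>m kron \<rho>2 psi_minus_proj)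
    = kron (c1 \<cdot>\<^sub>m tensor_id d d' m \<Lambda> \<rho>1) psi_plus_proj + kron (c2 \<cdot>\<^sub>m tensor_id d d' m \<Lambda> \<rho>2) psi_minus_proj"
proof -
  have "kron \<rho>1 psi_plus_proj \<in> carrier_mat (d * (m * 4)) (d * (m * 4))"
    "kron \<rho>2 psi_minus_proj \<in> carrier_mat (d * (m * 4)) (d * (m * 4))"
    using kron_carrier[OF \<rho>1 bell_block_carrier(4)] kron_carrier[OF \<rho>2 bell_block_carrier(5)]
    by (simp_all add: mult.assoc)
  moreover have "psi_plus_proj \<in> carrier_mat 4 4" "psi_minus_proj \<in> carrier_mat 4 4"
    using bell_block_carrier(4,5) by simp_all
  ultimately show ?thesis
    using \<rho>1 \<rho>2
    by (simp add: tensor_id_add[OF L] tensor_id_smult[OF L] tensor_id_kron[OF L] kron_smult_left)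
qed

lemma weighted_tensor_id_density:
  assumes L: "cptp d d' \<Lambda>" and \<rho>: "density (d * m) \<rho>" and "p \<ge> 0"
  shows "complex_of_real p \<cdot>\<^sub>m tensor_id d d' m \<Lambda> \<rho> \<in> carrier_mat (d' * m) (d' * m)"
    "psd (complex_of_real p \<cdot>\<^sub>m tensor_id d d' m \<Lambda> \<rho>)"
    "mtrace (complex_of_real p \<cdot>\<^sub>m tensor_id d d' m \<Lambda> \<rho>) = p"
proof -
  have "\<rho> \<in> carrier_mat (d * m) (d * m)" "psd \<rho>" "mtrace \<rho> = 1"
    using \<rho> by (auto simp: density_def)
  then show "complex_of_real p \<cdot>\<^sub>m tensor_id d d' m \<Lambda> \<rho> \<in> carrier_mat (d' * m) (d' * m)"
    "psd (complex_of_real p \<cdot>\<^sub>m tensor_id d d' m \<Lambda> \<rho>)"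
    "mtrace (complex_of_real p \<cdot>\<^sub>m tensor_id d d' m \<Lambda> \<rho>) = p"
    using psd_smult[OF cptpD(5)[OF L] tensor_id_carrier \<open>p \<ge> 0\<close>]
    by (auto simp: mtrace_smult[of _ "d' * m"] mtrace_tensor_id[OF L])
qed

theorem mainTheorem4:
  fixes d d' m :: nat and p1 p2 :: real
    and \<rho>1 \<rho>2 :: "complex mat" and \<Lambda> :: "complex mat \<Rightarrow> complex mat"
  assumes "density (d * m) \<rho>1" and "density (d * m) \<rho>2"
    and "p1 \<ge> 0" and "p2 \<ge> 0" and "p1 + p2 = 1"
    and "cptp d d' \<Lambda>"
  shows "let \<rho> = complex_of_real p1 \<cdot>\<^sub>m kron \<rho>1 psi_plus_proj
                 + complex_of_real p2 \<cdot>\<^sub>m kron \<rho>2 psi_minus_proj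
         in negativity (d' * m * 2) 2 (tensor_id d d' (m * 4) \<Lambda> \<rho>)
            = trace_norm (tensor_id d d' m \<Lambda>
                 (complex_of_real p1 \<cdot>\<^sub>m \<rho>1 - complex_of_real p2 \<cdot>\<^sub>m \<rho>2)) / 2"
proof -
  note L = assms(6)
  have \<rho>: "\<rho>1 \<in> carrier_mat (d * m) (d * m)" "\<rho>2 \<in> carrier_mat (d * m) (d * m)"
    using assms(1,2) by (auto simp: density_def)
  define X where "X = complex_of_real p1 \<cdot>\<^sub>m tensor_id d d' m \<Lambda> \<rho>1"
  define Y where "Y = complex_of_real p2 \<cdot>\<^sub>m tensor_id d d' m \<Lambda> \<rho>2"
  note X = weighted_tensor_id_density[OF L assms(1,3), folded X_def]
  note Y = weighted_tensor_id_density[OF L assms(2,4), folded Y_def]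
  have W: "psd (X + Y)" "X + Y \<in> carrier_mat (d' * m) (d' * m)" "Re (mtrace (X + Y)) = 1"
    using psd_add[OF X(2) Y(2) X(1) Y(1)] X Y assms(5) by (simp_all add: mtrace_add[of _ "d' * m"])
  have "tensor_id d d' (m * 4) \<Lambda> (complex_of_real p1 \<cdot>\<^sub>m kron \<rho>1 psi_plus_proj
      + complex_of_real p2 \<cdot>\<^sub>m kron \<rho>2 psi_minus_proj) = kron X psi_plus_proj + kron Y psi_minus_proj"
    unfolding X_def Y_def by (rule tensor_id_bell_mixture[OF L \<rho>])
  moreover have "ptrans2 (d' * m * 2) 2 (kron X psi_plus_proj + kron Y psi_minus_proj)
      = kron (X + Y) half_odd_proj + kron (X - Y) half_even_flip"
    by (rule ptrans2_bell_mixture[OF X(1) Y(1)])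
  moreover have "trace_norm (kron (X + Y) half_odd_proj + kron (X - Y) half_even_flip) = 1 + trace_norm (X - Y)"
    using trace_norm_bell_block_sum[OF W(1,2) minus_carrier_mat[OF Y(1), of X]] W(3) by simp
  moreover have "tensor_id d d' m \<Lambda> (complex_of_real p1 \<cdot>\<^sub>m \<rho>1 - complex_of_real p2 \<cdot>\<^sub>m \<rho>2) = X - Y"
    using \<rho> by (simp add: X_def Y_def tensor_id_minus[OF L] tensor_id_smult[OF L])
  ultimately show ?thesis
    by (simp add: Let_def negativity_def)
qed

end
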